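(* For every $g\in\mathscr T'$, the map $e^{a(g_x)}:L^2_x(\mathbb R^3,\mathcal F_{\rm fin}(\mathscr T))\to L^2_x(\mathbb R^3,\mathcal F_{\rm fin}(\mathscr T))$ is injective.
   Context: $\mathscr T=C_0^\infty(\mathbb R^3\setminus\{0\})$, $\mathfrak h=L^2(\mathbb R^3,dk)$, $\mathscr T'$ the continuous antilinear functionals on $\mathscr T$, $\langle\varphi,f\rangle:=\overline{\varphi(f)}$ (equal to $\langle\varphi,f\rangle_{L^2}$ for $\varphi\in L^2$). $\mathcal F(L^2_k)$ is the symmetric Fock space over $L^2(\mathbb R^3,dk)$ and $\mathcal F_{\rm fin}(\mathscr T)$ the vectors with finitely many nonzero components, the $n$-th in the algebraic symmetric tensor product of $n$ copies of $\mathscr T$. $\mathcal N_0=L^2(\mathbb R^3_x)\otimes\mathcal F(L^2_k)\cong L^2(\mathbb R^3_x;\mathcal F(L^2_k))$, and $L^2_x(\mathbb R^3,\mathcal F_{\rm fin}(\mathscr T))$ denotes the space of (classes of) square-integrable functions $x\mapsto\Psi(x)$ with $\Psi(x)\in\mathcal F_{\rm fin}(\mathscr T)$ for a.e. $x$ (with number of nonzero components bounded uniformly in $x$). For $g\in\mathscr T'$ and $x\in\mathbb R^3$, $g_x:=e^{2\pi ik\cdot x}g\in\mathscr T'$, i.e. $\langle g_x,f\rangle=\langle g,e^{-2\pi ik\cdot x}f\rangle$. The operator $a(g_x)$ acts pointwise in $x$: $(a(g_x)\Psi(x))_n=\frac{\sqrt{n+1}}{(n+1)!}\sum_{\sigma\in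 S_{n+1}}\langle g_x,\psi_{\sigma(1)}(x)\rangle\psi_{\sigma(2)}(x)\otimes\cdots\otimes\psi_{\sigma(n+1)}(x)$ for $\Psi_{n+1}(x)=\psi_1(x)\otimes_s\cdots\otimes_s\psi_{n+1}(x)$ with $\psi_j(x)\in\mathscr T$, extended linearly; $e^{a(g_x)}:=\sum_k a(g_x)^k/k!$, a finite sum. *)

theory Defs
  imports "HOL-Analysis.Analysis"
begin

definition pderiv3 :: "3 \<Rightarrow> (real^3 \<Rightarrow> complex) \<Rightarrow> real^3 \<Rightarrow> complex" where
  "pderiv3 i f x = vector_derivative (\<lambda>t::real. f (x + t *\<^sub>R axis i 1)) (at 0)"

fun piter :: "3 list \<Rightarrow> (real^3 \<Rightarrow> complex) \<Rightarrow> real^3 \<Rightarrow> complex" where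
  "piter [] f = f"
| "piter (i # is) f = pderiv3 i (piter is f)"

definition smooth3 :: "(real^3 \<Rightarrow> complex) \<Rightarrow> bool" where
  "smooth3 f \<longleftrightarrow> (\<forall>is. continuous_on UNIV (piter is f) \<and>
     (\<forall>i x. ((\<lambda>t::real. piter is f (x + t *\<^sub>R axis i 1)) has_vector_derivative piter (i # is) f x) (at 0)))"

definition tsupp :: "(real^3 \<Rightarrow> complex) \<Rightarrow> (real^3) set" where
  "tsupp f = closure {x. f x \<noteq> 0}"

definition T_space :: "(real^3 \<Rightarrow> complex) set" where
  "T_space = {f. smooth3 f \<and> compact (tsupp f) \<and> 0 \<notin> tsupp f}"

section \<open>T': continuous antilinear functionals on T (LF topology)\<close>

definition T_dual :: "((real^3 \<Rightarrow> complex) \<Rightarrow> complex) set" where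
  "T_dual = {\<phi>.
     (\<forall>f\<in>T_space. \<forall>h\<in>T_space. \<phi> (\<lambda>k. f k + h k) = \<phi> f + \<phi> h) \<and>
     (\<forall>c. \<forall>f\<in>T_space. \<phi> (\<lambda>k. c * f k) = cnj c * \<phi> f) \<and>
     (\<forall>K. compact K \<and> 0 \<notin> K \<longrightarrow>
        (\<exists>C N. \<forall>f\<in>T_space. tsupp f \<subseteq> K \<longrightarrow>
           (\<forall>M. (\<forall>is x. length is \<le> N \<longrightarrow> cmod (piter is f x) \<le> M) \<longrightarrow> cmod (\<phi> f) \<le> C * M)))}"

definition pairing :: "((real^3 \<Rightarrow> complex) \<Rightarrow> complex) \<Rightarrow> (real^3 \<Rightarrow> complex) \<Rightarrow> complex" where
  "pairing \<phi> f = cnj (\<phi> f)"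

text \<open>n-particle functions are functions on lists of momenta, vanishing off length n.
  psi_1 (x)_s ... (x)_s psi_n = (1/n!) sum_sigma psi_sigma(1) (x) ... (x) psi_sigma(n).\<close>
definition sym_prod :: "nat \<Rightarrow> (nat \<Rightarrow> real^3 \<Rightarrow> complex) \<Rightarrow> (real^3) list \<Rightarrow> complex" where
  "sym_prod n \<psi> ks = (if length ks = n then
      (\<Sum>\<sigma>\<in>{\<sigma>. \<sigma> permutes {..<n}}. \<Prod>i<n. \<psi> (\<sigma> i) (ks ! i)) / of_nat (fact n) else 0)"

definition symT :: "nat \<Rightarrow> ((real^3) list \<Rightarrow> complex) set" where
  "symT n = {F. \<exists>m (c :: nat \<Rightarrow> complex) (\<psi> :: nat \<Rightarrow> nat \<Rightarrow> real^3 \<Rightarrow> complex).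
      (\<forall>j<m. \<forall>i<n. \<psi> j i \<in> T_space) \<and> F = (\<lambda>ks. \<Sum>j<m. c j * sym_prod n (\<psi> j) ks)}"

type_synonym fock = "nat \<Rightarrow> (real^3) list \<Rightarrow> complex"

definition Ffin :: "fock set" where
  "Ffin = {\<Psi>. (\<forall>n. \<Psi> n \<in> symT n) \<and> finite {n. \<Psi> n \<noteq> (\<lambda>_. 0)}}"

text \<open>(a(g_x) Psi)_n(k_1..k_n) = sqrt(n+1) <g_x, Psi_{n+1}(., k_1..k_n)>,
  with <g_x, f> = <g, e^{-2 pi i k x} f>.\<close>
definition ann :: "((real^3 \<Rightarrow> complex) \<Rightarrow> complex) \<Rightarrow> real^3 \<Rightarrow> fock \<Rightarrow> fock" where
  "ann g x \<Psi> = (\<lambda>n ks. if length ks = n then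
      complex_of_real (sqrt (real (Suc n))) *
        pairing g (\<lambda>k0. cis (- 2 * pi * (k0 \<bullet> x)) * \<Psi> (Suc n) (k0 # ks))
    else 0)"

definition exp_ann :: "((real^3 \<Rightarrow> complex) \<Rightarrow> complex) \<Rightarrow> real^3 \<Rightarrow> fock \<Rightarrow> fock" where
  "exp_ann g x \<Psi> = (\<lambda>n ks. \<Sum>j. ((ann g x ^^ j) \<Psi>) n ks / of_nat (fact j))"

definition L2x_Ffin :: "(real^3 \<Rightarrow> fock) \<Rightarrow> bool" where
  "L2x_Ffin \<Psi> \<longleftrightarrow>
     (\<forall>n. (\<lambda>(x, k). \<Psi> x n (map k [0..<n])) \<in>
            borel_measurable (lborel \<Otimes>\<^sub>M PiM {..<n} (\<lambda>_. (lborel :: (real^3) measure)))) \<and>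
     (\<integral>\<^sup>+ x. (\<Sum>n. \<integral>\<^sup>+ k. (ennreal (cmod (\<Psi> x n (map k [0..<n])))) ^ 2
                     \<partial>PiM {..<n} (\<lambda>_. (lborel :: (real^3) measure))) \<partial>lborel) < \<infinity> \<and>
     (\<exists>N. AE x in lborel. \<Psi> x \<in> Ffin \<and> card {n. \<Psi> x n \<noteq> (\<lambda>_. 0)} \<le> N)"

end

theory Submission
  imports Defs
begin

text \<open>The annihilation operator lowers the particle number by one, and it maps the zero vector to
  zero because \<open>g\<close> is antilinear. Hence on a vector with finitely many nonzero components the
  exponential series is a finite sum, whose component of degree \<open>n\<close> is \<open>\<Psi>\<^sub>n\<close> plus terms depending
  only on the components of degree \<open>> n\<close>. Two vectors with the same image therefore agree
  degree by degree, going down from the top.\<close>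

definition lowering :: "((nat \<Rightarrow> 'b \<Rightarrow> 'a::zero) \<Rightarrow> (nat \<Rightarrow> 'b \<Rightarrow> 'a)) \<Rightarrow> bool" where
  "lowering A \<longleftrightarrow> A (\<lambda>_ _. 0) = (\<lambda>_ _. 0) \<and> (\<forall>P Q n. P (Suc n) = Q (Suc n) \<longrightarrow> A P n = A Q n)"

definition op_exp ::
    "((nat \<Rightarrow> 'b \<Rightarrow> 'a::real_normed_field) \<Rightarrow> (nat \<Rightarrow> 'b \<Rightarrow> 'a)) \<Rightarrow> (nat \<Rightarrow> 'b \<Rightarrow> 'a) \<Rightarrow> nat \<Rightarrow> 'b \<Rightarrow> 'a" where
  "op_exp A P = (\<lambda>n ks. \<Sum>j. (A ^^ j) P n ks / of_nat (fact j))"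

lemma lowering_zero: "lowering A \<Longrightarrow> A (\<lambda>_ _. 0) = (\<lambda>_ _. 0)"
  unfolding lowering_def by blast

lemma lowering_cong: "lowering A \<Longrightarrow> P (Suc n) = Q (Suc n) \<Longrightarrow> A P n = A Q n"
  unfolding lowering_def by blast

lemma lowering_funpow_cong:
  assumes "lowering A" and "P (n + j) = Q (n + j)"
  shows "(A ^^ j) P n = (A ^^ j) Q n"
  using assms(2)
proof (induction j arbitrary: n)
  case (Suc j)
  then have "(A ^^ j) P (Suc n) = (A ^^ j) Q (Suc n)" by simp
  then show ?case
    unfolding funpow.simps comp_apply by (rule lowering_cong[OF assms(1)])
qed simp

lemma lowering_funpow_vanish:
  assumes "lowering A" and "\<forall>m>N. P m = (\<lambda>_. 0)" and "n + j > N"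
  shows "(A ^^ j) P n = (\<lambda>_. 0)"
proof -
  have zero: "(A ^^ i) (\<lambda>_ _. 0) = (\<lambda>_ _. 0)" for i
    by (induction i) (simp_all add: lowering_zero[OF assms(1)])
  have "(A ^^ j) P n = (A ^^ j) (\<lambda>_ _. 0) n"
    using assms by (intro lowering_funpow_cong) auto
  with zero show ?thesis by simp
qed

lemma op_exp_split_head:
  assumes "lowering A" and "\<forall>m>N. P m = (\<lambda>_. 0)"
  shows "op_exp A P n ks = P n ks + (\<Sum>j. (A ^^ Suc j) P n ks / of_nat (fact (Suc j)))"
proof -
  have "summable (\<lambda>j. (A ^^ j) P n ks / of_nat (fact j))"
    by (rule summable_finite[of "{..N}"]) (use lowering_funpow_vanish[OF assms] in auto)
  from suminf_split_head[OF this] show ?thesis by (simp add: op_exp_def)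
qed

lemma op_exp_inj:
  assumes A: "lowering A" and P: "\<forall>m>N. P m = (\<lambda>_. 0)" and Q: "\<forall>m>N. Q m = (\<lambda>_. 0)"
    and eq: "op_exp A P = op_exp A Q"
  shows "P = Q"
proof -
  have "\<forall>m\<ge>n. P m = Q m" if "n \<le> Suc N" for n
    using that
  proof (induction rule: inc_induct)
    case base
    then show ?case using P Q by simp
  next
    case (step n)
    have funpow_eq: "(A ^^ Suc j) P n = (A ^^ Suc j) Q n" for j
      using step.IH by (intro lowering_funpow_cong[OF A]) simp
    have "P n = Q n"
    proof
      fix ks
      have "op_exp A P n ks = op_exp A Q n ks" using eq by simp
      then show "P n ks = Q n ks"
        by (simp only: op_exp_split_head[OF A P] op_exp_split_head[OF A Q] funpow_eq add_right_cancel)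
    qed
    with step.IH show ?case by (metis Suc_leI le_neq_implies_less)
  qed
  then show ?thesis by auto
qed

lemma op_exp_inj_finite_support:
  assumes A: "lowering A" and "finite {n. P n \<noteq> (\<lambda>_. 0)}" and "finite {n. Q n \<noteq> (\<lambda>_. 0)}"
    and eq: "op_exp A P = op_exp A Q"
  shows "P = Q"
proof -
  obtain N where N: "\<forall>n\<in>{n. P n \<noteq> (\<lambda>_. 0)} \<union> {n. Q n \<noteq> (\<lambda>_. 0)}. n \<le> N"
    using finite_UnI[OF assms(2,3)] finite_nat_set_iff_bounded_le by blast
  have "\<forall>m>N. P m = (\<lambda>_. 0)" and "\<forall>m>N. Q m = (\<lambda>_. 0)"
    using N leD by blast+
  then show ?thesis by (rule op_exp_inj[OF A _ _ eq])
qed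

lemma piter_zero: "piter is (\<lambda>_. 0) = (\<lambda>_. 0)"
  by (induction "is") (auto simp: pderiv3_def fun_eq_iff)

lemma zero_in_T_space: "(\<lambda>_. 0) \<in> T_space"
proof -
  have "pderiv3 i (\<lambda>_. 0) = (\<lambda>_. 0)" for i
    using piter_zero[of "[i]"] by simp
  then show ?thesis
    by (simp add: T_space_def smooth3_def tsupp_def piter_zero)
qed

lemma T_dual_zero: "g \<in> T_dual \<Longrightarrow> g (\<lambda>_. 0) = 0"
  using zero_in_T_space by (force simp: T_dual_def)

lemma lowering_ann: "g \<in> T_dual \<Longrightarrow> lowering (ann g x)"
  by (simp add: lowering_def ann_def pairing_def T_dual_zero fun_eq_iff)

lemma exp_ann_eq_op_exp: "exp_ann g x = op_exp (ann g x)"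
  by (simp add: fun_eq_iff exp_ann_def op_exp_def)

theorem proposition4p8:
  fixes g :: "(real^3 \<Rightarrow> complex) \<Rightarrow> complex"
    and \<Psi> \<Phi> :: "real^3 \<Rightarrow> fock"
  assumes "g \<in> T_dual"
    and "L2x_Ffin \<Psi>" and "L2x_Ffin \<Phi>"
    and "AE x in lborel. exp_ann g x (\<Psi> x) = exp_ann g x (\<Phi> x)"
  shows "AE x in lborel. \<Psi> x = \<Phi> x"
proof -
  have "AE x in lborel. \<Psi> x \<in> Ffin" and "AE x in lborel. \<Phi> x \<in> Ffin"
    using assms(2,3) unfolding L2x_Ffin_def by (auto elim: eventually_mono)
  with assms(4) show ?thesis
  proof eventually_elim
    case (elim x)
    then show ?case
      using op_exp_inj_finite_support[OF lowering_ann[OF assms(1)]]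
      by (simp add: Ffin_def exp_ann_eq_op_exp)
  qed
qed

end
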